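(* Let $a$ be a positive integer, let $G$ be a finite simple graph of arboricity at most $a$ containing no isolated edges, and let $\mathcal{G}\cong\mathcal{G}_1\times\mathcal{G}_2\times\cdots\times\mathcal{G}_a$ be an Abelian group that is a product of Abelian groups $\mathcal{G}_i$ with $|\mathcal{G}_i|\geq 4$ for $i=1,\ldots,a$. Then there exists a labeling $f\colon E(G)\to\mathcal{G}\setminus\{0\}$ such that $w_f(u)\neq w_f(v)$ for every edge $uv$ of $G$.
   Context: The arboricity of $G$ is the least number of forests into which $E(G)$ can be decomposed. An isolated edge is a connected component isomorphic to $K_2$. $w_f(v)=\sum_{u\in N(v)}f(uv)$, the sum in $\mathcal{G}$. *)

theory Defs
  imports "HOL-Algebra.Algebra"
begin

definition simple_graph :: "'v set \<Rightarrow> 'v set set \<Rightarrow> bool" where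
  "simple_graph V E \<longleftrightarrow> finite V \<and> (\<forall>e\<in>E. \<exists>u v. e = {u, v} \<and> u \<noteq> v \<and> u \<in> V \<and> v \<in> V)"

definition has_cycle :: "'v set set \<Rightarrow> bool" where
  "has_cycle F \<longleftrightarrow> (\<exists>vs. length vs \<ge> 3 \<and> distinct vs \<and>
      (\<forall>i < length vs - 1. {vs ! i, vs ! (i+1)} \<in> F) \<and> {last vs, hd vs} \<in> F)"

definition forest :: "'v set set \<Rightarrow> bool" where
  "forest F \<longleftrightarrow> \<not> has_cycle F"

definition forest_decomposable :: "'v set set \<Rightarrow> nat \<Rightarrow> bool" where
  "forest_decomposable E k \<longleftrightarrow> (\<exists>c :: 'v set \<Rightarrow> nat. (\<forall>e\<in>E. c e < k) \<and>
      (\<forall>i < k. forest {e \<in> E. c e = i}))"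

definition arboricity :: "'v set set \<Rightarrow> nat" where
  "arboricity E = (LEAST k. forest_decomposable E k)"

definition neighbors :: "'v set set \<Rightarrow> 'v \<Rightarrow> 'v set" where
  "neighbors E v = {u. {u, v} \<in> E}"

text \<open>An isolated edge: a component isomorphic to K2, i.e. an edge uv with
  N(u) = {v} and N(v) = {u}.\<close>
definition has_isolated_edge :: "'v set set \<Rightarrow> bool" where
  "has_isolated_edge E \<longleftrightarrow> (\<exists>u v. {u, v} \<in> E \<and> neighbors E u = {v} \<and> neighbors E v = {u})"

text \<open>Weighted degree w_f(v) = sum over neighbours u of f(uv), computed in the
  (multiplicatively written) abelian group G.\<close>
definition weight :: "('g, 'm) monoid_scheme \<Rightarrow> 'v set set \<Rightarrow> ('v set \<Rightarrow> 'g) \<Rightarrow> 'v \<Rightarrow> 'g" where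
  "weight G E f v = finprod G (\<lambda>u. f {u, v}) (neighbors E v)"

end

theory Submission
  imports Defs
begin

definition isolated_edge :: "'v set set \<Rightarrow> 'v \<Rightarrow> 'v \<Rightarrow> bool" where
  "isolated_edge F u v \<longleftrightarrow> neighbors F u = {v} \<and> neighbors F v = {u}"

definition pendant :: "'v set set \<Rightarrow> 'v \<Rightarrow> 'v \<Rightarrow> bool" where
  "pendant F r d \<longleftrightarrow> d \<in> neighbors F r \<and> neighbors F d = {r}"

definition delete_vertex :: "'v set set \<Rightarrow> 'v \<Rightarrow> 'v set set" where
  "delete_vertex F r = {e \<in> F. r \<notin> e}"

definition is_path :: "'v set set \<Rightarrow> 'v list \<Rightarrow> bool" where
  "is_path F vs \<longleftrightarrow> vs \<noteq> [] \<and> distinct vs \<and> (\<forall>i < length vs - 1. {vs ! i, vs ! Suc i} \<in> F)"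

definition reachable :: "'v set set \<Rightarrow> 'v \<Rightarrow> 'v \<Rightarrow> bool" where
  "reachable F a b \<longleftrightarrow> (\<exists>vs. is_path F vs \<and> hd vs = a \<and> last vs = b)"

definition separated :: "'v set set \<Rightarrow> 'v set \<Rightarrow> bool" where
  "separated F R \<longleftrightarrow> (\<forall>a\<in>R. \<forall>b\<in>R. a \<noteq> b \<longrightarrow> \<not> reachable F a b)"

definition star_extension :: "'v \<Rightarrow> ('v \<Rightarrow> 'a) \<Rightarrow> ('v set \<Rightarrow> 'a) \<Rightarrow> 'v set \<Rightarrow> 'a" where
  "star_extension r y x e = (if r \<in> e then y (the_elem (e - {r})) else x e)"

definition rooted_proper_labelling ::
    "('a, 'b) monoid_scheme \<Rightarrow> 'v set set \<Rightarrow> ('v \<Rightarrow> 'a) \<Rightarrow> 'v set \<Rightarrow> ('v \<Rightarrow> 'a) \<Rightarrow>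
      ('v set \<Rightarrow> 'a) \<Rightarrow> bool" where
  "rooted_proper_labelling G F g R P x \<longleftrightarrow>
    (\<forall>e\<in>F. x e \<in> carrier G - {\<one>\<^bsub>G\<^esub>}) \<and>
    (\<forall>u v. {u, v} \<in> F \<longrightarrow> \<not> isolated_edge F u v \<longrightarrow>
      g u \<otimes>\<^bsub>G\<^esub> weight G F x u \<noteq> g v \<otimes>\<^bsub>G\<^esub> weight G F x v) \<and>
    (\<forall>v\<in>R. g v \<otimes>\<^bsub>G\<^esub> weight G F x v \<noteq> P v)"

lemma star_extension_at: "c \<noteq> r \<Longrightarrow> star_extension r y x {r, c} = y c"
  by (simp add: star_extension_def insert_Diff_if)

lemma separatedD: "separated F R \<Longrightarrow> a \<in> R \<Longrightarrow> b \<in> R \<Longrightarrow> a \<noteq> b \<Longrightarrow> \<not> reachable F a b"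
  unfolding separated_def by blast

lemma isolated_edge_commute: "isolated_edge F u v \<longleftrightarrow> isolated_edge F v u"
  unfolding isolated_edge_def by blast

lemma in_neighbors_commute: "u \<in> neighbors F v \<longleftrightarrow> v \<in> neighbors F u"
  unfolding neighbors_def by (simp add: insert_commute)

lemma simple_graph_subset: "simple_graph V F \<Longrightarrow> F' \<subseteq> F \<Longrightarrow> simple_graph V F'"
  unfolding simple_graph_def by blast

lemma simple_graph_finite: "simple_graph V F \<Longrightarrow> finite F"
  unfolding simple_graph_def by (metis (no_types, lifting) Pow_iff empty_subsetI finite_Pow_iff
      insert_subset rev_finite_subset subsetI)

lemma simple_graph_no_loop: "simple_graph V F \<Longrightarrow> {u} \<notin> F"
  unfolding simple_graph_def by (metis doubleton_eq_iff insert_absorb2)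

lemma simple_graph_edge_at:
  assumes "simple_graph V F" "e \<in> F" "r \<in> e"
  shows "\<exists>c. e = {c, r} \<and> c \<noteq> r"
proof -
  obtain u v where "e = {u, v}" "u \<noteq> v"
    using assms(1,2) unfolding simple_graph_def by blast
  then show ?thesis
    using assms(3) by (metis insert_commute insertE singletonD)
qed

lemma finite_neighbors: "simple_graph V F \<Longrightarrow> finite (neighbors F v)"
  unfolding simple_graph_def neighbors_def
  by (rule finite_subset[of _ V]) (auto simp: doubleton_eq_iff)

lemma not_in_own_neighbors: "simple_graph V F \<Longrightarrow> v \<notin> neighbors F v"
  unfolding neighbors_def using simple_graph_no_loop by fastforce

lemma forest_subset: "forest F \<Longrightarrow> F' \<subseteq> F \<Longrightarrow> forest F'"
  unfolding forest_def has_cycle_def by blast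

lemma neighbors_delete_vertex:
  "neighbors (delete_vertex F r) v = (if v = r then {} else neighbors F v - {r})"
  unfolding neighbors_def delete_vertex_def by (cases "v = r") auto

lemma delete_vertex_subset: "delete_vertex F r \<subseteq> F"
  unfolding delete_vertex_def by blast

lemma card_delete_vertex_less:
  assumes "finite F" "neighbors F r \<noteq> {}"
  shows "card (delete_vertex F r) < card F"
proof (rule psubset_card_mono[OF assms(1)])
  obtain c where "{c, r} \<in> F"
    using assms(2) unfolding neighbors_def by blast
  moreover have "{c, r} \<notin> delete_vertex F r"
    by (simp add: delete_vertex_def)
  moreover have "delete_vertex F r \<subseteq> F"
    by (simp add: delete_vertex_def)
  ultimately show "delete_vertex F r \<subset> F"
    by blast
qed

lemma is_path_Cons:
  "is_path F (v # vs) \<longleftrightarrow> v \<notin> set vs \<and> (vs = [] \<or> {v, hd vs} \<in> F \<and> is_path F vs)"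
proof (cases vs)
  case (Cons w ws)
  have "(\<forall>i < Suc (length ws). {(v # w # ws) ! i, (v # w # ws) ! Suc i} \<in> F) \<longleftrightarrow>
      {v, w} \<in> F \<and> (\<forall>i < length ws. {(w # ws) ! i, (w # ws) ! Suc i} \<in> F)"
    unfolding All_less_Suc2 by simp
  then show ?thesis
    using Cons unfolding is_path_def by (simp add: conj_ac)
qed (simp add: is_path_def)

lemma is_path_singleton [simp]: "is_path F [v]"
  unfolding is_path_def by simp

lemma is_path_subset: "is_path F' vs \<Longrightarrow> F' \<subseteq> F \<Longrightarrow> is_path F vs"
  unfolding is_path_def by blast

lemma is_path_rev: "is_path F vs \<Longrightarrow> is_path F (rev vs)"
  unfolding is_path_def
proof (intro conjI allI impI; (elim conjE)?)
  fix i assume vs: "vs \<noteq> []" "distinct vs" "\<forall>i < length vs - 1. {vs ! i, vs ! Suc i} \<in> F"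
    and i: "i < length (rev vs) - 1"
  have "{vs ! (length vs - 2 - i), vs ! Suc (length vs - 2 - i)} \<in> F"
    using vs(3) i by simp
  moreover have "rev vs ! i = vs ! Suc (length vs - 2 - i)" "rev vs ! Suc i = vs ! (length vs - 2 - i)"
    using i by (auto simp: rev_nth Suc_diff_Suc)
  ultimately show "{rev vs ! i, rev vs ! Suc i} \<in> F"
    by (simp add: insert_commute)
qed auto

lemma reachable_subset: "reachable F' a b \<Longrightarrow> F' \<subseteq> F \<Longrightarrow> reachable F a b"
  unfolding reachable_def using is_path_subset by blast

lemma reachable_commute: "reachable F a b \<Longrightarrow> reachable F b a"
  unfolding reachable_def
  by (metis hd_rev is_path_rev last_rev)

lemma path_vertex_in_edge:
  assumes "is_path F vs" "v \<in> set vs" "v \<noteq> hd vs"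
  shows "\<exists>e\<in>F. v \<in> e"
proof -
  obtain i where i: "i < length vs" "vs ! i = v"
    using assms(2) by (metis in_set_conv_nth)
  have "i \<noteq> 0"
    using i assms(3) hd_conv_nth[of vs] by (metis length_greater_0_conv order_less_trans)
  then have "i - 1 < length vs - 1" "Suc (i - 1) = i"
    using i(1) by auto
  then have "{vs ! (i - 1), v} \<in> F"
    using assms(1) i(2) unfolding is_path_def by metis
  then show ?thesis
    by blast
qed

lemma has_cycleI:
  assumes "is_path F vs" "3 \<le> length vs" "{last vs, hd vs} \<in> F"
  shows "has_cycle F"
  using assms unfolding has_cycle_def is_path_def by (intro exI[of _ vs]) simp

lemma forest_triangle_free:
  assumes "simple_graph V F" "forest F" "u \<in> neighbors F r" "v \<in> neighbors F r"
  shows "{u, v} \<notin> F"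
proof
  assume uv: "{u, v} \<in> F"
  have "u \<noteq> r" "v \<noteq> r"
    using assms(1,3,4) not_in_own_neighbors by metis+
  moreover have "u \<noteq> v"
    using uv simple_graph_no_loop[OF assms(1)] by auto
  ultimately have "is_path F [r, u, v]"
    using uv assms(3) by (simp add: is_path_Cons neighbors_def insert_commute)
  moreover have "{last [r, u, v], hd [r, u, v]} \<in> F"
    using assms(4) by (simp add: neighbors_def)
  ultimately have "has_cycle F"
    by (intro has_cycleI) auto
  then show False
    using assms(2) unfolding forest_def by simp
qed

lemma is_path_delete_vertex_Cons:
  assumes "is_path (delete_vertex F r) vs" "{r, hd vs} \<in> F" "r \<noteq> hd vs"
  shows "is_path F (r # vs)"
proof -
  have "r \<notin> set vs"
    using path_vertex_in_edge[OF assms(1)] assms(3) unfolding delete_vertex_def by blast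
  moreover have "is_path F vs"
    using assms(1) is_path_subset unfolding delete_vertex_def by blast
  ultimately show ?thesis
    using assms(2) by (simp add: is_path_Cons)
qed

lemma separated_delete_vertex:
  assumes "simple_graph V F" "forest F" "separated F R" "r \<in> R \<or> R = {}"
    and "M \<subseteq> neighbors F r"
  shows "separated (delete_vertex F r) (R - {r} \<union> M)"
proof -
  have *: False if a: "a \<in> M" and b: "b \<in> R - {r} \<union> M" "a \<noteq> b"
    and ab: "reachable (delete_vertex F r) a b" for a b
  proof -
    obtain vs where vs: "is_path (delete_vertex F r) vs" "hd vs = a" "last vs = b"
      using ab unfolding reachable_def by blast
    have "a \<noteq> r" "{r, a} \<in> F"
      using a assms(1,5) not_in_own_neighbors by (fastforce simp: neighbors_def insert_commute)+
    then have path: "is_path F (r # vs)"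
      using is_path_delete_vertex_Cons[OF vs(1)] vs(2) by simp
    show False
    proof (cases "b \<in> M")
      case True
      have "2 \<le> length vs"
        using vs b(2) unfolding is_path_def by (cases vs) (auto simp: Suc_le_eq)
      moreover have "{last (r # vs), hd (r # vs)} \<in> F"
        using True assms(5) vs(1,3) unfolding neighbors_def is_path_def by auto
      ultimately have "has_cycle F"
        using path by (intro has_cycleI) auto
      then show False
        using assms(2) unfolding forest_def by simp
    next
      case False
      then have "b \<in> R" "b \<noteq> r" "r \<in> R"
        using b(1) assms(4) by auto
      moreover have "reachable F r b"
        unfolding reachable_def using path vs(1,3) unfolding is_path_def
        by (intro exI[of _ "r # vs"]) simp
      ultimately show False
        using separatedD[OF assms(3)] by blast
    qed
  qed
  show ?thesis
    unfolding separated_def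
  proof (intro ballI impI notI)
    fix a b
    assume a: "a \<in> R - {r} \<union> M" and b: "b \<in> R - {r} \<union> M" and "a \<noteq> b"
      and ab: "reachable (delete_vertex F r) a b"
    consider "a \<in> M" | "b \<in> M" | "a \<in> R" "b \<in> R"
      using a b by blast
    then show False
    proof cases
      case 1
      then show False
        using *[OF 1 b \<open>a \<noteq> b\<close> ab] by argo
    next
      case 2
      then show False
        using *[OF 2 a _ reachable_commute[OF ab]] \<open>a \<noteq> b\<close> by argo
    next
      case 3
      then show False
        using separatedD[OF assms(3) 3 \<open>a \<noteq> b\<close>] reachable_subset[OF ab delete_vertex_subset]
        by argo
    qed
  qed
qed

lemma separated_far:
  assumes "simple_graph V F" "separated F R" "r \<in> R" "v \<in> R" "v \<noteq> r"
  shows "v \<notin> neighbors F r" "neighbors F v \<inter> neighbors F r = {}"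
proof -
  show "v \<notin> neighbors F r"
  proof
    assume "v \<in> neighbors F r"
    then have "is_path F [r, v]"
      using assms(5) by (simp add: is_path_Cons neighbors_def insert_commute)
    then show False
      using assms(2-5) unfolding separated_def reachable_def by fastforce
  qed
  show "neighbors F v \<inter> neighbors F r = {}"
  proof (rule ccontr)
    assume "neighbors F v \<inter> neighbors F r \<noteq> {}"
    then obtain d where d: "d \<in> neighbors F v" "d \<in> neighbors F r"
      by blast
    then have "d \<noteq> v" "d \<noteq> r"
      using not_in_own_neighbors[OF assms(1)] in_neighbors_commute by metis+
    then have "is_path F [r, d, v]"
      using d assms(5) by (simp add: is_path_Cons neighbors_def insert_commute)
    then show False
      using assms(2-5) unfolding separated_def reachable_def by fastforce
  qed
qed

lemma pendant_delete_vertex_far: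
  assumes "v \<noteq> r" "v \<notin> neighbors F r" "neighbors F v \<inter> neighbors F r = {}"
  shows "pendant (delete_vertex F r) v d \<longleftrightarrow> pendant F v d"
proof -
  have "r \<notin> neighbors F v"
    using assms(2) in_neighbors_commute by metis
  moreover have "d \<noteq> r \<and> r \<notin> neighbors F d" if "d \<in> neighbors F v"
    using that assms(3) in_neighbors_commute by (metis calculation disjoint_iff)
  ultimately show ?thesis
    unfolding pendant_def neighbors_delete_vertex using assms(1) by auto
qed

context comm_group
begin

lemma exists_avoiding_three:
  assumes "4 \<le> card (carrier G)"
  shows "\<exists>z\<in>carrier G. z \<noteq> a \<and> z \<noteq> b \<and> z \<noteq> c"
proof -
  have "card {a, b, c} \<le> 3"
    by (auto simp: card_insert_if)
  then have "card (carrier G - {a, b, c}) > 0"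
    using assms diff_card_le_card_Diff[of "{a, b, c}" "carrier G"] by simp
  then show ?thesis
    by (metis DiffE card_gt_0_iff empty_iff ex_in_conv insertCI)
qed

lemma finprod_remove:
  assumes "finite A" "a \<in> A" "f \<in> A \<rightarrow> carrier G"
  shows "finprod G f A = f a \<otimes> finprod G f (A - {a})"
proof -
  have "A = insert a (A - {a})"
    using assms(2) by blast
  then show ?thesis
    using assms finprod_insert[of "A - {a}" a f] by (metis Diff_iff Pi_split_insert_domain finite_Diff singletonI)
qed

lemma exists_labelling_avoiding:
  assumes "4 \<le> card (carrier G)" "finite C" "C \<noteq> {} \<or> Q \<noteq> \<one>" "Q \<in> carrier G"
  shows "\<exists>y. y \<in> C \<rightarrow> carrier G - {\<one>} \<and> (\<forall>c\<in>C. y c \<noteq> forb c) \<and> finprod G y C \<noteq> Q"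
proof -
  have "\<forall>c. \<exists>z. z \<in> carrier G \<and> z \<noteq> \<one> \<and> z \<noteq> forb c"
    using exists_avoiding_three[OF assms(1)] by blast
  then obtain y0 where y0: "\<And>c. y0 c \<in> carrier G \<and> y0 c \<noteq> \<one> \<and> y0 c \<noteq> forb c"
    by metis
  show ?thesis
  proof (cases "C = {}")
    case True
    then show ?thesis using assms(3) by auto
  next
    case False
    then obtain c0 where c0: "c0 \<in> C" by blast
    define R where "R = finprod G y0 (C - {c0})"
    have R: "R \<in> carrier G"
      unfolding R_def using y0 by (intro finprod_closed) auto
    obtain z where z: "z \<in> carrier G" "z \<noteq> \<one>" "z \<noteq> forb c0" "z \<noteq> Q \<otimes> inv R"
      using exists_avoiding_three[OF assms(1)] by blast
    define y where "y = y0(c0 := z)"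
    have "finprod G y (C - {c0}) = R"
      unfolding R_def y_def using y0 by (intro finprod_cong) auto
    then have "finprod G y C = z \<otimes> R"
      using finprod_remove[OF assms(2) c0, of y] y0 z by (auto simp: y_def)
    also have "\<dots> \<noteq> Q"
      using z R assms(4) inv_solve_right by metis
    finally show ?thesis
      using y0 z by (intro exI[of _ y]) (auto simp: y_def)
  qed
qed

lemma exists_labelling_hitting_leaf:
  assumes "4 \<le> card (carrier G)" "finite C" "L \<subseteq> C" "l1 \<in> L" "C \<noteq> {l1}"
    and "A \<in> carrier G" "gl \<in> L \<rightarrow> carrier G"
  shows "\<exists>y. y \<in> C \<rightarrow> carrier G - {\<one>} \<and> (\<forall>c\<in>C - L. y c \<noteq> forb c) \<and>
    (\<forall>l\<in>L. gl l \<otimes> y l \<noteq> gl l1) \<and> A \<otimes> finprod G y C = gl l1"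
proof -
  have l1: "l1 \<in> C" "gl l1 \<in> carrier G"
    using assms(3,4,7) by auto
  define forb' where "forb' c = (if c \<in> L then inv (gl c) \<otimes> gl l1 else forb c)" for c
  obtain y0 where y0: "y0 \<in> C - {l1} \<rightarrow> carrier G - {\<one>}" "\<forall>c\<in>C - {l1}. y0 c \<noteq> forb' c"
    and prod: "finprod G y0 (C - {l1}) \<noteq> inv A \<otimes> gl l1"
    using exists_labelling_avoiding[OF assms(1), of "C - {l1}" "inv A \<otimes> gl l1" forb'] assms l1
    by auto
  define R where "R = finprod G y0 (C - {l1})"
  have R: "R \<in> carrier G"
    unfolding R_def using y0(1) by (intro finprod_closed) auto
  \<comment> \<open>the label at the leaf l1 is the one that balances the star\<close>
  define w where "w = inv (A \<otimes> R) \<otimes> gl l1"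
  have w: "w \<in> carrier G"
    unfolding w_def using assms(6) R l1 by simp
  have w1: "w \<noteq> \<one>"
  proof
    assume "w = \<one>"
    then have "gl l1 = A \<otimes> R"
      using assms(6) R l1 inv_solve_left'[of \<one> "A \<otimes> R" "gl l1"] by (simp add: w_def)
    then show False
      using prod assms(6) R l1 inv_solve_left by (auto simp: R_def)
  qed
  define y where "y = y0(l1 := w)"
  have "finprod G y (C - {l1}) = R"
    unfolding R_def y_def using y0(1) by (intro finprod_cong) auto
  then have "A \<otimes> finprod G y C = A \<otimes> (w \<otimes> R)"
    using finprod_remove[OF assms(2) l1(1), of y] y0(1) w by (fastforce simp: y_def)
  also have "\<dots> = (A \<otimes> R) \<otimes> w"
    using assms(6) R w by (simp add: m_ac)
  also have "\<dots> = gl l1"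
    using assms(6) R l1 w by (metis inv_solve_left' m_closed w_def)
  finally have hit: "A \<otimes> finprod G y C = gl l1" .
  have "gl l \<otimes> y l \<noteq> gl l1" if "l \<in> L" for l
  proof (cases "l = l1")
    case True
    then show ?thesis using w w1 l1 by (simp add: y_def)
  next
    case False
    then have "l \<in> C - {l1}"
      using that assms(3) by blast
    then have "y l \<in> carrier G" "y l \<noteq> inv (gl l) \<otimes> gl l1"
      using that False y0(1) y0(2)[rule_format, of l] by (auto simp: y_def forb'_def)
    moreover have "gl l \<in> carrier G"
      using that assms(7) by blast
    ultimately show ?thesis
      using l1 inv_solve_left[of "y l" "gl l" "gl l1"] by auto
  qed
  moreover have "\<forall>c\<in>C - L. y c \<noteq> forb c"
    using y0(2) assms(4) unfolding y_def forb'_def by (metis DiffE DiffI fun_upd_apply singletonD)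
  moreover have "y \<in> C \<rightarrow> carrier G - {\<one>}"
    using y0(1) w w1 unfolding y_def by (auto simp: Pi_iff)
  ultimately show ?thesis
    using hit by blast
qed

lemma exists_pow_avoiding:
  assumes "4 \<le> card (carrier G)" "D \<in> carrier G" "D \<noteq> \<one>"
  shows "\<exists>t\<in>carrier G. t \<noteq> \<one> \<and> t [^] (n::nat) \<noteq> D"
proof -
  obtain t0 where t0: "t0 \<in> carrier G" "t0 \<noteq> \<one>"
    using exists_avoiding_three[OF assms(1)] by blast
  obtain t1 where t1: "t1 \<in> carrier G" "t1 \<noteq> \<one>" "t1 \<noteq> inv t0"
    using exists_avoiding_three[OF assms(1)] by blast
  have "t0 \<otimes> t1 \<noteq> \<one>"
    using t0 t1 inv_equality[of t1 t0] m_comm by metis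
  moreover have "(t0 \<otimes> t1) [^] n \<noteq> D" if "t0 [^] n = D" "t1 [^] n = D"
    using that assms(2,3) t0 t1 by (simp add: nat_pow_distrib)
  ultimately show ?thesis
    using t0 t1 by (metis m_closed)
qed

lemma exists_labelling_equal_leaves:
  assumes "4 \<le> card (carrier G)" "finite C" "L \<subseteq> C" "lm \<in> L"
    and "A \<in> carrier G" "P \<in> carrier G" "A \<noteq> P"
  shows "\<exists>y. y \<in> C \<rightarrow> carrier G - {\<one>} \<and> (\<forall>c\<in>C - L. y c \<noteq> forb c) \<and>
    (\<forall>l\<in>L. P \<otimes> y l \<noteq> A \<otimes> finprod G y C) \<and> A \<otimes> finprod G y C \<noteq> P"
proof -
  define q where "q = inv A \<otimes> P"
  have q: "q \<in> carrier G" "q \<noteq> \<one>"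
    unfolding q_def using assms(5-7) inv_solve_left'[of \<one> A P] by auto
  obtain yM where yM: "yM \<in> C - L \<rightarrow> carrier G - {\<one>}" "\<forall>c\<in>C - L. yM c \<noteq> forb c"
    and RM: "finprod G yM (C - L) \<noteq> q"
    using exists_labelling_avoiding[OF assms(1), of "C - L" q forb] assms(2) q by auto
  define R where "R = finprod G yM (C - L)"
  have R: "R \<in> carrier G"
    unfolding R_def using yM(1) by (intro finprod_closed) auto
  define n where "n = card (L - {lm})"
  \<comment> \<open>all leaves but lm get the same label t, so that only one value of the leaf at lm is excluded
    for each of the constraints below\<close>
  obtain t where t: "t \<in> carrier G" "t \<noteq> \<one>" "t [^] n \<noteq> inv R \<otimes> q"
    using exists_pow_avoiding[OF assms(1), of "inv R \<otimes> q" n] R q RM inv_solve_left'[of \<one> R q]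
    by (auto simp: R_def)
  define B where "B = R \<otimes> t [^] n"
  have B: "B \<in> carrier G" "B \<noteq> q"
    unfolding B_def using R t q inv_solve_left[of "t [^] n" R q] by auto
  obtain s where s: "s \<in> carrier G" "s \<noteq> \<one>" "s \<noteq> inv B \<otimes> q" "s \<noteq> inv B \<otimes> q \<otimes> t"
    using exists_avoiding_three[OF assms(1)] by blast
  define y where "y c = (if c \<in> L then if c = lm then s else t else yM c)" for c
  have yC: "y \<in> C \<rightarrow> carrier G - {\<one>}"
    using yM(1) s t by (auto simp: y_def Pi_iff)
  have finL: "finite L"
    using assms(2,3) finite_subset by blast
  have "finprod G y C = finprod G y (C - L) \<otimes> finprod G y L"
    using finprod_Un_disjoint[of "C - L" L y] assms(2,3) finL yC by (auto simp: Un_absorb2)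
  moreover have "finprod G y (C - L) = R"
    unfolding R_def using yM(1) by (intro finprod_cong) (auto simp: y_def)
  moreover have "finprod G y L = s \<otimes> t [^] n"
  proof -
    have "finprod G y (L - {lm}) = finprod G (\<lambda>_. t) (L - {lm})"
      using t by (intro finprod_cong) (auto simp: y_def)
    moreover have "y \<in> L \<rightarrow> carrier G"
      using yC assms(3) by blast
    ultimately show ?thesis
      using finprod_remove[OF finL assms(4), of y] assms(4) t
      by (simp add: y_def n_def finprod_const)
  qed
  ultimately have prod: "A \<otimes> finprod G y C = A \<otimes> (B \<otimes> s)"
    using R s t by (simp add: B_def m_ac)
  have "A \<otimes> (B \<otimes> s) \<noteq> P"
    using s B assms(5,6) inv_solve_left[of "B \<otimes> s" A P] inv_solve_left[of s B q]
    by (auto simp: q_def)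
  moreover have "P \<otimes> y l \<noteq> A \<otimes> (B \<otimes> s)" if "l \<in> L" for l
  proof
    assume eq: "P \<otimes> y l = A \<otimes> (B \<otimes> s)"
    have yl: "y l \<in> carrier G"
      using yC that assms(3) by blast
    have "q \<otimes> y l = B \<otimes> s"
      using eq assms(5,6) B s yl inv_solve_left[of "B \<otimes> s" A "P \<otimes> y l"]
      by (simp add: q_def m_assoc)
    show False
    proof (cases "l = lm")
      case True
      then show False
        using \<open>q \<otimes> y l = B \<otimes> s\<close> B s q assms(4) by (simp add: y_def)
    next
      case False
      then have "s = inv B \<otimes> q \<otimes> t"
        using \<open>q \<otimes> y l = B \<otimes> s\<close> that B s q t inv_solve_left[of s B "q \<otimes> t"]
        by (simp add: y_def m_assoc)
      then show False
        using s by simp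
    qed
  qed
  moreover have "\<forall>c\<in>C - L. y c \<noteq> forb c"
    using yM(2) by (simp add: y_def)
  ultimately show ?thesis
    using yC prod by (intro exI[of _ y]) auto
qed

lemma exists_star_labelling:
  assumes "4 \<le> card (carrier G)" "finite C" "C \<noteq> {}" "L \<subseteq> C"
    and "A \<in> carrier G" "P \<in> carrier G" "gl \<in> L \<rightarrow> carrier G"
    and "L \<noteq> {} \<Longrightarrow> \<forall>l\<in>L. gl l = P \<Longrightarrow> A \<noteq> P"
  shows "\<exists>y. y \<in> C \<rightarrow> carrier G - {\<one>} \<and> (\<forall>c\<in>C - L. y c \<noteq> forb c) \<and>
    (\<forall>l\<in>L. C \<noteq> {l} \<longrightarrow> gl l \<otimes> y l \<noteq> A \<otimes> finprod G y C) \<and> A \<otimes> finprod G y C \<noteq> P"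
proof -
  consider "L = {} \<or> (\<exists>c. C = {c})" | l1 where "l1 \<in> L" "gl l1 \<noteq> P" "\<forall>c. C \<noteq> {c}"
    | "L \<noteq> {}" "\<forall>l\<in>L. gl l = P"
    by blast
  then show ?thesis
  proof cases
    case 1
    have "\<forall>l\<in>L. C \<noteq> {l}" if "L = {}"
      using that by blast
    moreover have "\<forall>l\<in>L. C = {l}" if "C = {c}" for c
      using that assms(4) by blast
    moreover obtain y where "y \<in> C \<rightarrow> carrier G - {\<one>}" "\<forall>c\<in>C. y c \<noteq> forb c"
      and "finprod G y C \<noteq> inv A \<otimes> P"
      using exists_labelling_avoiding[OF assms(1,2), of "inv A \<otimes> P" forb] assms(3,5,6) by auto
    moreover have "finprod G y C \<in> carrier G"
      using \<open>y \<in> C \<rightarrow> carrier G - {\<one>}\<close> by (intro finprod_closed) auto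
    ultimately show ?thesis
      using 1 assms(5,6) inv_solve_left[of "finprod G y C" A P] by (intro exI[of _ y]) auto
  next
    case 2
    then show ?thesis
      using exists_labelling_hitting_leaf[OF assms(1,2,4) 2(1) _ assms(5,7), of forb] by metis
  next
    case 3
    then obtain lm where "lm \<in> L"
      by blast
    then show ?thesis
      using exists_labelling_equal_leaves[OF assms(1,2,4) _ assms(5,6), of lm forb] 3 assms(8)
      by metis
  qed
qed

lemma weight_closed: "\<forall>e\<in>F. x e \<in> carrier G \<Longrightarrow> weight G F x v \<in> carrier G"
  unfolding weight_def neighbors_def by (intro finprod_closed) auto

lemma weight_cong:
  assumes "\<And>e. e \<in> F \<Longrightarrow> x e = x' e" "\<forall>e\<in>F. x' e \<in> carrier G"
  shows "weight G F x v = weight G F x' v"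
  unfolding weight_def using assms by (intro finprod_cong) (auto simp: neighbors_def)

lemma weight_singleton:
  assumes "neighbors F v = {u}" "x {u, v} \<in> carrier G"
  shows "weight G F x v = x {u, v}"
  using assms by (simp add: weight_def)

lemma weight_Un:
  assumes "simple_graph V (F \<union> H)" "F \<inter> H = {}" "\<forall>e\<in>F \<union> H. x e \<in> carrier G"
  shows "weight G (F \<union> H) x v = weight G F x v \<otimes> weight G H x v"
proof -
  have "neighbors (F \<union> H) v = neighbors F v \<union> neighbors H v"
    unfolding neighbors_def by blast
  moreover have "neighbors F v \<inter> neighbors H v = {}"
    using assms(2) unfolding neighbors_def by blast
  moreover have "finite (neighbors F v)" "finite (neighbors H v)"
    using finite_neighbors[OF simple_graph_subset[OF assms(1)]] by blast+
  ultimately show ?thesis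
    unfolding weight_def using assms(3)
    by (simp only:) (intro finprod_Un_disjoint; auto simp: neighbors_def)
qed

lemma weight_update:
  assumes "simple_graph V H" "{a, b} \<in> H" "\<forall>e. z e \<in> carrier G" "d \<in> carrier G"
  shows "weight G H (z({a, b} := z {a, b} \<otimes> d)) w =
    weight G H z w \<otimes> (if w = a \<or> w = b then d else \<one>)"
proof -
  define N where "N = neighbors H w"
  define h where "h u = (if {u, w} = {a, b} then d else \<one>)" for u
  have "a \<noteq> b"
    using assms(1,2) simple_graph_no_loop by fastforce
  have "weight G H (z({a, b} := z {a, b} \<otimes> d)) w = finprod G (\<lambda>u. z {u, w} \<otimes> h u) N"
    unfolding weight_def N_def h_def using assms(3,4) by (intro finprod_cong') auto
  also have "\<dots> = weight G H z w \<otimes> finprod G h N"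
    unfolding weight_def N_def h_def using assms(3,4) by (simp add: Pi_iff)
  also have "finprod G h N = (if w = a \<or> w = b then d else \<one>)"
  proof -
    have "finite N"
      unfolding N_def using finite_neighbors[OF assms(1)] .
    moreover have "h = (\<lambda>u. if u = b then d else \<one>)" if "w = a"
      using that \<open>a \<noteq> b\<close> by (auto simp: h_def doubleton_eq_iff)
    moreover have "h = (\<lambda>u. if u = a then d else \<one>)" if "w = b"
      using that \<open>a \<noteq> b\<close> by (auto simp: h_def doubleton_eq_iff)
    moreover have "h = (\<lambda>_. \<one>)" if "w \<noteq> a" "w \<noteq> b"
      using that by (auto simp: h_def doubleton_eq_iff)
    moreover have "b \<in> N" if "w = a"
      using that assms(2) by (simp add: N_def neighbors_def insert_commute)
    moreover have "a \<in> N" if "w = b"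
      using that assms(2) by (simp add: N_def neighbors_def)
    ultimately show ?thesis
      using finprod_singleton_swap[of _ N "\<lambda>_. d"] assms(4) by auto
  qed
  finally show ?thesis .
qed

lemma weight_star_extension_center:
  assumes "simple_graph V F" "y \<in> neighbors F r \<rightarrow> carrier G"
  shows "weight G F (star_extension r y x) r = finprod G y (neighbors F r)"
proof -
  have "star_extension r y x {c, r} = y c" if "c \<in> neighbors F r" for c
  proof -
    have "{c, r} - {r} = {c}"
      using that not_in_own_neighbors[OF assms(1)] by auto
    then show ?thesis
      by (simp add: star_extension_def)
  qed
  then show ?thesis
    unfolding weight_def using assms(2) by (intro finprod_cong) auto
qed

lemma weight_star_extension:
  assumes "simple_graph V F" "y \<in> neighbors F r \<rightarrow> carrier G"
    and "\<forall>e\<in>delete_vertex F r. x e \<in> carrier G" "v \<noteq> r"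
  shows "weight G F (star_extension r y x) v =
    (if v \<in> neighbors F r then y v \<otimes> weight G (delete_vertex F r) x v
     else weight G (delete_vertex F r) x v)"
proof -
  let ?x = "star_extension r y x" and ?N = "neighbors (delete_vertex F r) v"
  have N: "neighbors F v = (if v \<in> neighbors F r then insert r ?N else ?N)"
    using assms(4) in_neighbors_commute[of v F r] by (auto simp: neighbors_delete_vertex)
  have "u \<noteq> r" "{u, v} \<in> delete_vertex F r" if "u \<in> ?N" for u
    using that assms(4) by (auto simp: neighbors_delete_vertex neighbors_def delete_vertex_def)
  then have rest: "finprod G (\<lambda>u. ?x {u, v}) ?N = weight G (delete_vertex F r) x v"
    unfolding weight_def using assms(3,4) by (intro finprod_cong') (auto simp: star_extension_def)
  have "finite ?N"
    using finite_neighbors[OF simple_graph_subset[OF assms(1) delete_vertex_subset]] .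
  moreover have "r \<notin> ?N"
    by (simp add: neighbors_delete_vertex)
  moreover have "?x {r, v} = y v"
    using assms(4) by (rule star_extension_at)
  moreover have "(\<lambda>u. ?x {u, v}) \<in> ?N \<rightarrow> carrier G"
    using \<open>\<And>u. u \<in> ?N \<Longrightarrow> u \<noteq> r\<close> \<open>\<And>u. u \<in> ?N \<Longrightarrow> {u, v} \<in> delete_vertex F r\<close> assms(3,4)
    by (auto simp: star_extension_def neighbors_delete_vertex)
  ultimately show ?thesis
    unfolding weight_def N rest[unfolded weight_def, symmetric]
    using assms(2) in_neighbors_commute[of v F r] by (auto simp: Pi_iff)
qed

end

locale root_deletion = comm_group +
  fixes V :: "'v set" and F :: "'v set set" and R :: "'v set"
    and g :: "'v \<Rightarrow> 'a" and P :: "'v \<Rightarrow> 'a" and r :: 'v and y :: "'v \<Rightarrow> 'a"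
  assumes graph: "simple_graph V F" and forest: "forest F"
    and roots_nonisolated: "\<forall>v\<in>R. neighbors F v \<noteq> {}"
    and roots_separated: "separated F R"
    and roots_pendant: "\<forall>v\<in>R. (\<exists>d. pendant F v d) \<longrightarrow> g v \<noteq> g (SOME d. pendant F v d)"
    and offsets: "g \<in> UNIV \<rightarrow> carrier G"
    and targets: "P \<in> R \<rightarrow> carrier G"
    and root: "r \<in> R \<or> R = {}"
    and root_nonisolated: "neighbors F r \<noteq> {}"
    and labels: "y \<in> neighbors F r \<rightarrow> carrier G - {\<one>}"
    and inner_labels: "\<forall>c\<in>neighbors F r. \<not> pendant F r c \<longrightarrow>
      y c \<noteq> inv (g c) \<otimes> g (SOME d. pendant (delete_vertex F r) c d)"
    and leaf_labels: "\<forall>c. pendant F r c \<longrightarrow> neighbors F r \<noteq> {c} \<longrightarrow>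
      g c \<otimes> y c \<noteq> g r \<otimes> finprod G y (neighbors F r)"
    and root_label: "r \<in> R \<longrightarrow> g r \<otimes> finprod G y (neighbors F r) \<noteq> P r"
begin

abbreviation C where "C \<equiv> neighbors F r"

abbreviation F' where "F' \<equiv> delete_vertex F r"

definition new_offset :: "'v \<Rightarrow> 'a" where
  "new_offset v = (if v \<in> C then g v \<otimes> y v else g v)"

definition new_roots :: "'v set" where
  "new_roots = R - {r} \<union> {c \<in> C. \<not> pendant F r c}"

definition new_target :: "'v \<Rightarrow> 'a" where
  "new_target v = (if v \<in> C \<and> \<not> pendant F r v then g r \<otimes> finprod G y C else P v)"

lemma r_not_in_C: "r \<notin> C"
  using not_in_own_neighbors[OF graph] .

lemma far_roots:
  assumes "v \<in> R" "v \<noteq> r"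
  shows "v \<notin> C" "neighbors F v \<inter> C = {}"
  using separated_far[OF graph roots_separated _ assms] root assms(1) by auto

lemma new_offset_carrier: "new_offset \<in> UNIV \<rightarrow> carrier G"
  using offsets labels by (auto simp: new_offset_def Pi_iff)

lemma new_target_carrier: "new_target \<in> new_roots \<rightarrow> carrier G"
proof -
  have "finprod G y C \<in> carrier G"
    using labels by (intro finprod_closed) auto
  then show ?thesis
    using offsets targets by (auto simp: new_target_def new_roots_def Pi_iff)
qed

lemma new_roots_nonisolated: "\<forall>v\<in>new_roots. neighbors F' v \<noteq> {}"
proof
  fix v assume v: "v \<in> new_roots"
  show "neighbors F' v \<noteq> {}"
  proof (cases "v \<in> C")
    case True
    then have "\<not> pendant F r v" "v \<noteq> r"
      using v far_roots(1) r_not_in_C by (auto simp: new_roots_def)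
    moreover have "r \<in> neighbors F v"
      using True in_neighbors_commute by metis
    ultimately show ?thesis
      using True by (auto simp: pendant_def neighbors_delete_vertex)
  next
    case False
    then have "v \<in> R" "v \<noteq> r"
      using v by (auto simp: new_roots_def)
    moreover have "r \<notin> neighbors F v"
      using far_roots(1)[OF \<open>v \<in> R\<close> \<open>v \<noteq> r\<close>] in_neighbors_commute by metis
    ultimately show ?thesis
      using roots_nonisolated by (simp add: neighbors_delete_vertex)
  qed
qed

lemma new_roots_separated: "separated F' new_roots"
  unfolding new_roots_def by (rule separated_delete_vertex[OF graph forest roots_separated root]) auto

lemma new_roots_pendant:
  "\<forall>v\<in>new_roots. (\<exists>d. pendant F' v d) \<longrightarrow> new_offset v \<noteq> new_offset (SOME d. pendant F' v d)"
proof (intro ballI impI)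
  fix v assume v: "v \<in> new_roots" and "\<exists>d. pendant F' v d"
  define d where "d = (SOME d. pendant F' v d)"
  have d: "pendant F' v d"
    unfolding d_def using \<open>\<exists>d. pendant F' v d\<close> by (rule someI_ex)
  then have "d \<in> neighbors F v" "d \<noteq> r"
    by (auto simp: pendant_def neighbors_delete_vertex split: if_splits)
  have "new_offset v \<noteq> new_offset d"
  proof (cases "v \<in> C")
    case True
    then have "\<not> pendant F r v"
      using v far_roots(1) by (auto simp: new_roots_def)
    then have "y v \<noteq> inv (g v) \<otimes> g d"
      using inner_labels True by (simp add: d_def)
    then have "g v \<otimes> y v \<noteq> g d"
      using inv_solve_left offsets labels True by (metis DiffD1 PiE UNIV_I)
    moreover have "d \<notin> C"
      using forest_triangle_free[OF graph forest True] \<open>d \<in> neighbors F v\<close>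
      by (metis in_neighbors_commute neighbors_def mem_Collect_eq)
    ultimately show ?thesis
      using True by (simp add: new_offset_def)
  next
    case False
    then have vR: "v \<in> R" "v \<noteq> r"
      using v by (auto simp: new_roots_def)
    have "pendant F v d"
      using d pendant_delete_vertex_far[OF vR(2) far_roots[OF vR]] by simp
    then have "g v \<noteq> g d"
      using roots_pendant vR(1) pendant_delete_vertex_far[OF vR(2) far_roots[OF vR]]
      by (auto simp: d_def)
    moreover have "d \<notin> C"
      using far_roots(2)[OF vR] \<open>d \<in> neighbors F v\<close> by blast
    ultimately show ?thesis
      using False by (simp add: new_offset_def)
  qed
  then show "new_offset v \<noteq> new_offset (SOME d. pendant F' v d)"
    unfolding d_def .
qed

lemma isolated_edge_delete_vertex:
  assumes "{u, v} \<in> F'" "isolated_edge F' u v" "\<not> isolated_edge F u v"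
  shows "new_offset u \<noteq> new_offset v"
proof -
  have *: "new_offset a \<noteq> new_offset b"
    if ab: "a \<in> C" "{a, b} \<in> F'" "isolated_edge F' a b" for a b
  proof -
    have Na: "neighbors F' a = {b}" and "neighbors F' b = {a}"
      using ab(3) unfolding isolated_edge_def by auto
    then have "b \<noteq> r" "a \<noteq> r" "pendant F' a b"
      by (auto simp: neighbors_delete_vertex pendant_def split: if_splits)
    then have "(SOME d. pendant F' a d) = b"
      using Na by (auto simp: pendant_def)
    moreover have "\<not> pendant F r a"
      using Na \<open>b \<noteq> r\<close> \<open>a \<noteq> r\<close> by (auto simp: pendant_def neighbors_delete_vertex)
    ultimately have "y a \<noteq> inv (g a) \<otimes> g b"
      using inner_labels ab(1) by auto
    then have "g a \<otimes> y a \<noteq> g b"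
      using inv_solve_left offsets labels ab(1) by (metis DiffD1 PiE UNIV_I)
    moreover have "b \<notin> C"
      using forest_triangle_free[OF graph forest ab(1), of b] ab(2) by (auto simp: delete_vertex_def)
    ultimately show ?thesis
      using ab(1) by (simp add: new_offset_def)
  qed
  have "u \<noteq> r" "v \<noteq> r"
    using assms(1) by (auto simp: delete_vertex_def)
  then have "u \<in> C \<or> v \<in> C"
    using assms(2,3) in_neighbors_commute[of _ F r]
    by (auto simp: isolated_edge_def neighbors_delete_vertex)
  then show ?thesis
    using *[of u v] *[of v u] assms(1,2) isolated_edge_commute by (metis insert_commute)
qed

lemma lifted_labels:
  assumes "\<forall>e\<in>F'. x' e \<in> carrier G - {\<one>}"
  shows "\<forall>e\<in>F. star_extension r y x' e \<in> carrier G - {\<one>}"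
proof
  fix e assume e: "e \<in> F"
  show "star_extension r y x' e \<in> carrier G - {\<one>}"
  proof (cases "r \<in> e")
    case True
    then obtain c where "e = {c, r}" "c \<noteq> r"
      using simple_graph_edge_at[OF graph e] by blast
    then have "c \<in> C"
      using e by (simp add: neighbors_def)
    moreover have "star_extension r y x' e = y c"
      using star_extension_at[OF \<open>c \<noteq> r\<close>] \<open>e = {c, r}\<close> by (metis insert_commute)
    ultimately show ?thesis
      using labels by auto
  next
    case False
    then show ?thesis
      using assms e by (simp add: star_extension_def delete_vertex_def)
  qed
qed

lemma lifted_weight:
  assumes "\<forall>e\<in>F'. x' e \<in> carrier G" "v \<noteq> r"
  shows "g v \<otimes> weight G F (star_extension r y x') v = new_offset v \<otimes> weight G F' x' v"
  using weight_star_extension[OF graph _ assms] labels offsets weight_closed[OF assms(1)]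
  by (auto simp: new_offset_def m_assoc Pi_iff)

lemma lifted_weight_root: "weight G F (star_extension r y x') r = finprod G y C"
  using weight_star_extension_center[OF graph] labels by auto

lemma lifted_root_edge:
  assumes "rooted_proper_labelling G F' new_offset new_roots new_target x'"
    and "c \<in> C" "\<not> isolated_edge F r c"
  shows "g r \<otimes> weight G F (star_extension r y x') r \<noteq> g c \<otimes> weight G F (star_extension r y x') c"
proof (cases "pendant F r c")
  case True
  moreover have "c \<noteq> r" "y c \<in> carrier G"
    using assms(2) r_not_in_C labels by auto
  ultimately have "weight G F (star_extension r y x') c = y c"
    using weight_singleton[of F c r] by (simp add: pendant_def star_extension_at)
  moreover have "C \<noteq> {c}"
    using True assms(3) by (auto simp: pendant_def isolated_edge_def)
  ultimately show ?thesis
    using leaf_labels True lifted_weight_root by auto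
next
  case False
  then have "c \<in> new_roots" "new_target c = g r \<otimes> finprod G y C"
    using assms(2) by (auto simp: new_roots_def new_target_def)
  moreover have "c \<noteq> r"
    using assms(2) r_not_in_C by blast
  ultimately show ?thesis
    using assms(1) lifted_weight lifted_weight_root
    unfolding rooted_proper_labelling_def by auto
qed

lemma lift_solution:
  assumes "rooted_proper_labelling G F' new_offset new_roots new_target x'"
  shows "rooted_proper_labelling G F g R P (star_extension r y x')"
proof -
  let ?x = "star_extension r y x'"
  have x': "\<forall>e\<in>F'. x' e \<in> carrier G"
    using assms unfolding rooted_proper_labelling_def by blast
  have "g u \<otimes> weight G F ?x u \<noteq> g v \<otimes> weight G F ?x v"
    if uv: "{u, v} \<in> F" "\<not> isolated_edge F u v" for u v
  proof (cases "u = r \<or> v = r")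
    case True
    then show ?thesis
      using lifted_root_edge[OF assms] uv isolated_edge_commute
      by (metis in_neighbors_commute insert_commute neighbors_def mem_Collect_eq)
  next
    case False
    then have uv': "{u, v} \<in> F'"
      using uv(1) by (auto simp: delete_vertex_def)
    have "new_offset u \<otimes> weight G F' x' u \<noteq> new_offset v \<otimes> weight G F' x' v"
    proof (cases "isolated_edge F' u v")
      case True
      then have "weight G F' x' u = x' {u, v}" "weight G F' x' v = x' {u, v}"
        using x' uv' by (auto simp: isolated_edge_def weight_def insert_commute)
      then show ?thesis
        using isolated_edge_delete_vertex[OF uv' True uv(2)] new_offset_carrier x' uv'
        by (auto simp: Pi_iff)
    next
      case False
      then show ?thesis
        using assms uv' unfolding rooted_proper_labelling_def by blast
    qed
    then show ?thesis
      using lifted_weight[OF x'] False by auto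
  qed
  moreover have "g v \<otimes> weight G F ?x v \<noteq> P v" if "v \<in> R" for v
  proof (cases "v = r")
    case True
    then show ?thesis
      using root_label that lifted_weight_root by auto
  next
    case False
    then have "v \<in> new_roots" "new_target v = P v"
      using that far_roots(1) by (auto simp: new_roots_def new_target_def)
    then show ?thesis
      using assms lifted_weight[OF x' False] unfolding rooted_proper_labelling_def by auto
  qed
  ultimately show ?thesis
    using lifted_labels assms unfolding rooted_proper_labelling_def by blast
qed

end

context comm_group
begin

lemma exists_rooted_proper_labelling:
  assumes "4 \<le> card (carrier G)"
  shows "simple_graph V F \<Longrightarrow> forest F \<Longrightarrow> \<forall>v\<in>R. neighbors F v \<noteq> {} \<Longrightarrow> separated F R \<Longrightarrow>
    \<forall>v\<in>R. (\<exists>d. pendant F v d) \<longrightarrow> g v \<noteq> g (SOME d. pendant F v d) \<Longrightarrow>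
    g \<in> UNIV \<rightarrow> carrier G \<Longrightarrow> P \<in> R \<rightarrow> carrier G \<Longrightarrow>
    \<exists>x. rooted_proper_labelling G F g R P x"
proof (induction "card F" arbitrary: F R g P rule: less_induct)
  case less
  note graph = less.prems(1) and roots_nonisolated = less.prems(3)
    and roots_pendant = less.prems(5) and offsets = less.prems(6) and targets = less.prems(7)
  show ?case
  proof (cases "F = {}")
    case True
    then have "R = {}"
      using roots_nonisolated by (auto simp: neighbors_def)
    then show ?thesis
      using True by (auto simp: rooted_proper_labelling_def)
  next
    case False
    obtain r where root: "r \<in> R \<or> R = {}" and "neighbors F r \<noteq> {}"
    proof (cases "R = {}")
      case True
      obtain e where "e \<in> F"
        using False by blast
      then obtain c r where "e = {c, r}"
        using graph unfolding simple_graph_def by blast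
      then have "neighbors F r \<noteq> {}"
        using \<open>e \<in> F\<close> by (auto simp: neighbors_def)
      then show ?thesis
        using True that by blast
    next
      case False
      then show ?thesis
        using roots_nonisolated that by blast
    qed
    let ?C = "neighbors F r" and ?L = "{c. pendant F r c}"
    obtain p where p: "p \<in> carrier G" "r \<in> R \<Longrightarrow> p = P r" "r \<notin> R \<Longrightarrow> p \<noteq> g r"
      using exists_avoiding_three[OF assms, of "g r" "g r" "g r"] targets by (cases "r \<in> R") auto
    have "g r \<noteq> p" if "?L \<noteq> {}" "\<forall>l\<in>?L. g l = p"
    proof (cases "r \<in> R")
      case True
      have "(SOME d. pendant F r d) \<in> ?L"
        using that(1) by (auto intro: someI)
      then show ?thesis
        using roots_pendant True that p(2) by auto
    qed (use p in auto)
    moreover have "?L \<subseteq> ?C"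
      by (auto simp: pendant_def)
    ultimately obtain y where y: "y \<in> ?C \<rightarrow> carrier G - {\<one>}"
      "\<forall>c\<in>?C - ?L. y c \<noteq> inv (g c) \<otimes> g (SOME d. pendant (delete_vertex F r) c d)"
      "\<forall>l\<in>?L. ?C \<noteq> {l} \<longrightarrow> g l \<otimes> y l \<noteq> g r \<otimes> finprod G y ?C"
      "g r \<otimes> finprod G y ?C \<noteq> p"
      using exists_star_labelling[OF assms finite_neighbors[OF graph] \<open>?C \<noteq> {}\<close>, of ?L "g r" p g
          "\<lambda>c. inv (g c) \<otimes> g (SOME d. pendant (delete_vertex F r) c d)"]
        offsets p(1) by (auto simp: Pi_iff)
    interpret root_deletion G V F R g P r y
      using less.prems root \<open>?C \<noteq> {}\<close> y p(2) by unfold_locales auto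
    obtain x' where "rooted_proper_labelling G F' new_offset new_roots new_target x'"
      using less.hyps[OF card_delete_vertex_less[OF simple_graph_finite[OF graph] \<open>?C \<noteq> {}\<close>]
          simple_graph_subset[OF graph delete_vertex_subset] forest_subset[OF forest delete_vertex_subset]
          new_roots_nonisolated new_roots_separated new_roots_pendant new_offset_carrier new_target_carrier]
      by blast
    then show ?thesis
      using lift_solution by blast
  qed
qed

lemma separating_update:
  assumes "4 \<le> card (carrier G)" "simple_graph V E" "F \<subseteq> E" "\<forall>e. z e \<in> carrier G"
    and "isolated_edge F a b" "{x, a} \<in> E" "x \<noteq> b"
  shows "\<exists>z'. (\<forall>e. z' e \<in> carrier G) \<and> weight G (E - F) z' a \<noteq> weight G (E - F) z' b \<and>
    (\<forall>u v. isolated_edge F u v \<longrightarrow> {u, v} \<noteq> {a, b} \<longrightarrow>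
      weight G (E - F) z u \<noteq> weight G (E - F) z v \<longrightarrow>
      weight G (E - F) z' u \<noteq> weight G (E - F) z' v)"
proof -
  let ?H = "E - F"
  define D where "D = weight G ?H z"
  have D: "D w \<in> carrier G" for w
    unfolding D_def using assms(4) by (intro weight_closed) auto
  have graph: "simple_graph V ?H"
    using simple_graph_subset[OF assms(2)] by blast
  have Fa: "neighbors F a = {b}"
    using assms(5) by (simp add: isolated_edge_def)
  have xa: "{x, a} \<in> ?H"
    using assms(6,7) Fa by (auto simp: neighbors_def)
  have "a \<noteq> b" "x \<noteq> a"
    using Fa xa assms(3) simple_graph_no_loop[OF assms(2)] by (auto simp: neighbors_def)
  \<comment> \<open>the new label on the edge xa may only disturb the isolated edge of F at x, if any\<close>
  define y0 where "y0 = (SOME y. neighbors F x = {y})"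
  obtain d where d: "d \<in> carrier G" "d \<noteq> inv (D a) \<otimes> D b" "d \<noteq> inv (D x) \<otimes> D y0"
    using exists_avoiding_three[OF assms(1)] by blast
  define z' where "z' = z({x, a} := z {x, a} \<otimes> d)"
  have D': "weight G ?H z' w = D w \<otimes> (if w = x \<or> w = a then d else \<one>)" for w
    unfolding z'_def D_def using weight_update[OF graph xa assms(4) d(1)] .
  have shifted: "D u \<otimes> d \<noteq> D v" if "d \<noteq> inv (D u) \<otimes> D v" for u v
    using that D d(1) inv_solve_left by metis
  have "weight G ?H z' u \<noteq> weight G ?H z' v"
    if uv: "isolated_edge F u v" "{u, v} \<noteq> {a, b}" "D u \<noteq> D v" for u v
  proof -
    have "u \<noteq> a" "v \<noteq> a" "u \<noteq> v"
      using uv Fa by (auto simp: isolated_edge_def neighbors_def)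
    moreover have "y0 = v" if "u = x"
      using uv(1) that by (simp add: isolated_edge_def y0_def)
    moreover have "y0 = u" if "v = x"
      using uv(1) that by (simp add: isolated_edge_def y0_def)
    ultimately show ?thesis
      using D' D d uv(3) shifted[of u v] shifted[of v u] by auto
  qed
  moreover have "weight G ?H z' a \<noteq> weight G ?H z' b"
    using D' D shifted[OF d(2)] \<open>a \<noteq> b\<close> \<open>x \<noteq> b\<close> by auto
  moreover have "\<forall>e. z' e \<in> carrier G"
    using assms(4) d(1) by (simp add: z'_def)
  ultimately show ?thesis
    unfolding D_def by blast
qed

lemma exists_separating_labelling:
  assumes "4 \<le> card (carrier G)" "simple_graph V E" "\<not> has_isolated_edge E" "F \<subseteq> E"
  shows "\<exists>z. (\<forall>e. z e \<in> carrier G) \<and>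
    (\<forall>u v. isolated_edge F u v \<longrightarrow> weight G (E - F) z u \<noteq> weight G (E - F) z v)"
proof -
  have induct: "\<exists>z. (\<forall>e. z e \<in> carrier G) \<and>
      (\<forall>u v. {u, v} \<in> S \<longrightarrow> isolated_edge F u v \<longrightarrow> weight G (E - F) z u \<noteq> weight G (E - F) z v)"
    if "finite S" for S
    using that
  proof (induction S rule: finite_induct)
    case empty
    show ?case
      by (intro exI[of _ "\<lambda>_. \<one>"]) simp
  next
    case (insert m S)
    then obtain z where z: "\<forall>e. z e \<in> carrier G"
      and sep: "\<forall>u v. {u, v} \<in> S \<longrightarrow> isolated_edge F u v \<longrightarrow> weight G (E - F) z u \<noteq> weight G (E - F) z v"
      by blast
    show ?case
    proof (cases "\<exists>a b. m = {a, b} \<and> isolated_edge F a b")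
      case False
      then show ?thesis
        using z sep by blast
    next
      case True
      then obtain a b where ab: "m = {a, b}" "isolated_edge F a b"
        by blast
      then have "{a, b} \<in> E"
        using assms(4) by (auto simp: isolated_edge_def neighbors_def)
      then have "\<not> (neighbors E a = {b} \<and> neighbors E b = {a})"
        using assms(3) unfolding has_isolated_edge_def by blast
      moreover have "b \<in> neighbors E a" "a \<in> neighbors E b"
        using \<open>{a, b} \<in> E\<close> by (auto simp: neighbors_def insert_commute)
      ultimately obtain x where "x \<in> neighbors E a \<and> x \<noteq> b \<or> x \<in> neighbors E b \<and> x \<noteq> a"
        by blast
      then obtain a' b' where a'b': "{a', b'} = {a, b}" "isolated_edge F a' b'" "{x, a'} \<in> E" "x \<noteq> b'"
        using ab(2) isolated_edge_commute[of F a b] insert_commute[of a b "{}"]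
        unfolding neighbors_def by blast
      obtain z' where z': "\<forall>e. z' e \<in> carrier G"
        "weight G (E - F) z' a' \<noteq> weight G (E - F) z' b'"
        "\<forall>u v. isolated_edge F u v \<longrightarrow> {u, v} \<noteq> {a', b'} \<longrightarrow>
          weight G (E - F) z u \<noteq> weight G (E - F) z v \<longrightarrow>
          weight G (E - F) z' u \<noteq> weight G (E - F) z' v"
        using separating_update[OF assms(1,2,4) z a'b'(2-4)] by blast
      have "weight G (E - F) z' u \<noteq> weight G (E - F) z' v"
        if "{u, v} \<in> insert m S" "isolated_edge F u v" for u v
      proof (cases "{u, v} = {a', b'}")
        case True
        then show ?thesis
          using z'(2) by (auto simp: doubleton_eq_iff)
      next
        case False
        then show ?thesis
          using that sep z'(3) ab(1) a'b'(1) by auto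
      qed
      then show ?thesis
        using z'(1) by blast
    qed
  qed
  moreover have "{u, v} \<in> F" if "isolated_edge F u v" for u v
    using that by (auto simp: isolated_edge_def neighbors_def)
  ultimately show ?thesis
    using induct[OF simple_graph_finite[OF simple_graph_subset[OF assms(2,4)]]] by metis
qed

lemma exists_coordinate_labelling:
  assumes "4 \<le> card (carrier G)" "simple_graph V E" "\<not> has_isolated_edge E" "F \<subseteq> E" "forest F"
  shows "\<exists>t. (\<forall>e. t e \<in> carrier G) \<and> (\<forall>e\<in>F. t e \<noteq> \<one>) \<and>
    (\<forall>u v. {u, v} \<in> F \<longrightarrow> weight G E t u \<noteq> weight G E t v)"
proof -
  obtain z where z: "\<forall>e. z e \<in> carrier G"
    and sep: "\<forall>u v. isolated_edge F u v \<longrightarrow> weight G (E - F) z u \<noteq> weight G (E - F) z v"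
    using exists_separating_labelling[OF assms(1-4)] by blast
  let ?g = "weight G (E - F) z"
  have g: "?g v \<in> carrier G" for v
    using z by (intro weight_closed) auto
  obtain x where x: "rooted_proper_labelling G F ?g {} (\<lambda>_. \<one>) x"
    using exists_rooted_proper_labelling[OF assms(1) simple_graph_subset[OF assms(2,4)] assms(5),
        of "{}" ?g "\<lambda>_. \<one>"] g
    by (auto simp: separated_def)
  then have xF: "\<forall>e\<in>F. x e \<in> carrier G - {\<one>}"
    unfolding rooted_proper_labelling_def by blast
  define t where "t e = (if e \<in> F then x e else z e)" for e
  have t: "\<forall>e. t e \<in> carrier G"
    using xF z by (simp add: t_def)
  have w: "weight G E t v = ?g v \<otimes> weight G F x v" for v
  proof -
    have "weight G E t v = weight G F t v \<otimes> weight G (E - F) t v"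
      using weight_Un[of V F "E - F" t v] assms(2,4) t by (simp add: Un_absorb1)
    also have "weight G F t v = weight G F x v"
      using xF by (intro weight_cong) (auto simp: t_def)
    also have "weight G (E - F) t v = ?g v"
      using z by (intro weight_cong) (auto simp: t_def)
    finally show ?thesis
      using g weight_closed xF m_comm by (metis DiffD1)
  qed
  have "weight G E t u \<noteq> weight G E t v" if "{u, v} \<in> F" for u v
  proof (cases "isolated_edge F u v")
    case True
    have xuv: "x {u, v} \<in> carrier G"
      using xF that by blast
    have "weight G F x v = x {u, v}"
      using weight_singleton[of F v u x] True xuv by (simp add: isolated_edge_def)
    moreover have "weight G F x u = x {u, v}"
      using weight_singleton[of F u v x] True xuv by (simp add: isolated_edge_def insert_commute)
    ultimately show ?thesis
      using sep True w g xuv by simp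
  next
    case False
    then show ?thesis
      using x that w unfolding rooted_proper_labelling_def by auto
  qed
  then show ?thesis
    using t xF by (intro exI[of _ t]) (simp add: t_def)
qed

end

lemma hom_finprod:
  assumes "comm_group G" "comm_group H" "h \<in> hom G H" "finite A" "f \<in> A \<rightarrow> carrier G"
  shows "h (finprod G f A) = finprod H (\<lambda>a. h (f a)) A"
proof -
  interpret G: comm_group G by (rule assms(1))
  interpret H: comm_group H by (rule assms(2))
  have hC: "h u \<in> carrier H" if "u \<in> carrier G" for u
    using assms(3) that unfolding hom_def by blast
  show ?thesis
    using assms(4,5)
  proof (induction A rule: finite_induct)
    case empty
    then show ?case
      using hom_one[OF assms(3) G.is_group H.is_group] by simp
  next
    case (insert a A)
    then have "h (finprod G f (insert a A)) = h (f a) \<otimes>\<^bsub>H\<^esub> h (finprod G f A)"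
      using hom_mult[OF assms(3)] by simp
    then show ?case
      using insert hC by (simp add: Pi_iff)
  qed
qed

lemma hom_weight:
  assumes "comm_group G" "comm_group H" "h \<in> hom G H" "simple_graph V E"
    and "\<forall>e\<in>E. f e \<in> carrier G"
  shows "h (weight G E f v) = weight H E (\<lambda>e. h (f e)) v"
  unfolding weight_def using assms
  by (intro hom_finprod finite_neighbors) (auto simp: neighbors_def)

lemma exists_labelling_from_coordinates:
  assumes "comm_group G" "\<And>i. i \<in> I \<Longrightarrow> comm_group (Gs i)" "G \<cong> product_group I Gs"
    and "simple_graph V E" "\<And>i e. i \<in> I \<Longrightarrow> e \<in> E \<Longrightarrow> t i e \<in> carrier (Gs i)"
  shows "\<exists>f. (\<forall>e\<in>E. f e \<in> carrier G \<and> (f e = \<one>\<^bsub>G\<^esub> \<longrightarrow> (\<forall>i\<in>I. t i e = \<one>\<^bsub>Gs i\<^esub>))) \<and>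
    (\<forall>u v. weight G E f u = weight G E f v \<longrightarrow>
      (\<forall>i\<in>I. weight (Gs i) E (t i) u = weight (Gs i) E (t i) v))"
proof -
  obtain h where h: "h \<in> iso G (product_group I Gs)"
    using assms(3) unfolding is_iso_def by blast
  then have hom: "h \<in> hom G (product_group I Gs)"
    and img: "h ` carrier G = carrier (product_group I Gs)"
    unfolding iso_def bij_betw_def by auto
  define f where "f e = inv_into (carrier G) h (\<lambda>i\<in>I. t i e)" for e
  have T: "(\<lambda>i\<in>I. t i e) \<in> carrier (product_group I Gs)" if "e \<in> E" for e
    using assms(5) that by auto
  then have f: "f e \<in> carrier G" "h (f e) = (\<lambda>i\<in>I. t i e)" if "e \<in> E" for e
    unfolding f_def using img that by (auto simp: inv_into_into f_inv_into_f)
  have "h \<one>\<^bsub>G\<^esub> = \<one>\<^bsub>product_group I Gs\<^esub>"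
    using hom_one[OF hom] assms(1,2) by (simp add: comm_group_def)
  then have one: "t i e = \<one>\<^bsub>Gs i\<^esub>" if "e \<in> E" "f e = \<one>\<^bsub>G\<^esub>" "i \<in> I" for e i
    using f(2)[OF that(1)] that(2,3) by (metis one_product_group restrict_apply')
  have proj: "(\<lambda>u. h u i) \<in> hom G (Gs i)" if "i \<in> I" for i
    using hom that unfolding hom_def by (auto simp: PiE_iff)
  have "h (weight G E f v) i = weight (Gs i) E (t i) v" if "i \<in> I" for v i
  proof -
    have "h (weight G E f v) i = weight (Gs i) E (\<lambda>e. h (f e) i) v"
      using hom_weight[OF assms(1) assms(2)[OF that] proj[OF that] assms(4)] f by blast
    also have "\<dots> = weight (Gs i) E (t i) v"
      using f that assms(5) by (intro comm_group.weight_cong[OF assms(2)[OF that]]) auto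
    finally show ?thesis .
  qed
  then show ?thesis
    using f one by metis
qed

lemma at_most_one_edge_no_cycle:
  assumes "\<forall>e1\<in>F. \<forall>e2\<in>F. e1 = e2"
  shows "\<not> has_cycle F"
proof
  assume "has_cycle F"
  then obtain vs where vs: "3 \<le> length vs" "distinct vs" "\<forall>i < length vs - 1. {vs ! i, vs ! (i + 1)} \<in> F"
    unfolding has_cycle_def by blast
  have "{vs ! 0, vs ! 1} \<in> F" "{vs ! 1, vs ! 2} \<in> F"
    using vs(3)[rule_format, of 0] vs(3)[rule_format, of 1] vs(1) by (simp_all add: numeral_2_eq_2)
  then have "{vs ! 0, vs ! 1} = {vs ! 1, vs ! 2}"
    using assms by simp
  moreover have "vs \<noteq> []"
    using vs(1) by auto
  then have "vs ! 0 \<noteq> vs ! 1" "vs ! 0 \<noteq> vs ! 2"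
    using nth_eq_iff_index_eq[OF vs(2), of 0 1] nth_eq_iff_index_eq[OF vs(2), of 0 2] vs(1)
    by auto
  ultimately show False
    by (simp add: doubleton_eq_iff)
qed

lemma forest_decomposition:
  assumes "finite E" "arboricity E \<le> a"
  shows "\<exists>c. (\<forall>e\<in>E. c e < a) \<and> (\<forall>i<a. forest {e \<in> E. c e = i})"
proof -
  obtain c0 where "bij_betw c0 E {0..<card E}"
    using ex_bij_betw_finite_nat[OF assms(1)] by blast
  then have "forest_decomposable E (card E)"
    unfolding forest_decomposable_def forest_def bij_betw_def inj_on_def
    by (intro exI[of _ c0]) (auto intro!: at_most_one_edge_no_cycle)
  then have "forest_decomposable E (arboricity E)"
    unfolding arboricity_def by (rule LeastI)
  then obtain c where c: "\<forall>e\<in>E. c e < arboricity E" "\<forall>i < arboricity E. forest {e \<in> E. c e = i}"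
    unfolding forest_decomposable_def by blast
  moreover have "forest {e \<in> E. c e = i}" if "arboricity E \<le> i" for i
  proof -
    have "{e \<in> E. c e = i} = {}"
      using c(1) that by fastforce
    then show ?thesis
      unfolding forest_def by (metis at_most_one_edge_no_cycle empty_iff)
  qed
  ultimately show ?thesis
    using assms(2) by (metis less_le_trans not_le)
qed

theorem corollary5:
  fixes V :: "'v set" and E :: "'v set set" and a :: nat
    and G :: "('g, 'm) monoid_scheme"
    and Gs :: "nat \<Rightarrow> ('h, 'n) monoid_scheme"
  assumes "a > 0"
    and "simple_graph V E"
    and "arboricity E \<le> a"
    and "\<not> has_isolated_edge E"
    and "comm_group G"
    and "\<And>i. i < a \<Longrightarrow> comm_group (Gs i)"
    and "\<And>i. i < a \<Longrightarrow> card (carrier (Gs i)) \<ge> 4"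
    and "G \<cong> product_group {..<a} Gs"
  shows "\<exists>f. (\<forall>e\<in>E. f e \<in> carrier G - {\<one>\<^bsub>G\<^esub>}) \<and>
             (\<forall>u v. {u, v} \<in> E \<longrightarrow> weight G E f u \<noteq> weight G E f v)"
proof -
  obtain c where c: "\<forall>e\<in>E. c e < a" "\<forall>i<a. forest {e \<in> E. c e = i}"
    using forest_decomposition[OF simple_graph_finite[OF assms(2)] assms(3)] by blast
  define good where "good i t \<longleftrightarrow> (\<forall>e. t e \<in> carrier (Gs i)) \<and>
      (\<forall>e\<in>{e \<in> E. c e = i}. t e \<noteq> \<one>\<^bsub>Gs i\<^esub>) \<and>
      (\<forall>u v. {u, v} \<in> {e \<in> E. c e = i} \<longrightarrow> weight (Gs i) E t u \<noteq> weight (Gs i) E t v)" for i t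
  have exists_good: "\<exists>t. good i t" if "i < a" for i
    unfolding good_def using comm_group.exists_coordinate_labelling[OF assms(6,7)[OF that] assms(2,4)
        Collect_restrict c(2)[rule_format, OF that]] .
  define t where "t i = (SOME t. good i t)" for i
  have t: "good i (t i)" if "i < a" for i
    unfolding t_def using someI_ex[OF exists_good[OF that]] .
  obtain f where f: "\<forall>e\<in>E. f e \<in> carrier G \<and> (f e = \<one>\<^bsub>G\<^esub> \<longrightarrow> (\<forall>i\<in>{..<a}. t i e = \<one>\<^bsub>Gs i\<^esub>))"
    "\<forall>u v. weight G E f u = weight G E f v \<longrightarrow>
      (\<forall>i\<in>{..<a}. weight (Gs i) E (t i) u = weight (Gs i) E (t i) v)"
    using exists_labelling_from_coordinates[OF assms(5) assms(6) assms(8) assms(2), of t] t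
    unfolding good_def by auto
  show ?thesis
  proof (intro exI[of _ f] conjI ballI allI impI)
    fix e assume e: "e \<in> E"
    then have "c e < a" "t (c e) e \<noteq> \<one>\<^bsub>Gs (c e)\<^esub>"
      using c(1) t[of "c e"] unfolding good_def by auto
    then show "f e \<in> carrier G - {\<one>\<^bsub>G\<^esub>}"
      using f(1) e by blast
  next
    fix u v assume uv: "{u, v} \<in> E"
    then have "c {u, v} < a" "weight (Gs (c {u, v})) E (t (c {u, v})) u \<noteq>
        weight (Gs (c {u, v})) E (t (c {u, v})) v"
      using c(1) t[of "c {u, v}"] unfolding good_def by auto
    then show "weight G E f u \<noteq> weight G E f v"
      using f(2) by blast
  qed
qed
end
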